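(* Let $G$ be a finitely presented residually finite group and $g_1,\ldots,g_m$ non-trivial elements of $G$. For $k\in\mathbb{N}$ let $H_k$ be the normal subgroup of $G$ generated by $g_1^k,\ldots,g_m^k$. If $rdef(G)>1$, then $rdef(G/H_k)>1$ for infinitely many natural numbers $k$.
   Context: Residual deficiency: for a finitely presented group $K$ and a finite presentation $Q=\langle X\mid R\rangle$ of $K$ with $X$ freely generating $F_n$ and $\varphi:F_n\to K$ canonical, write $R=\{u_1^{m_1},\ldots,u_s^{m_s}\}$ with $u_i$ not proper powers in $F_n$; let $R_K$ be the intersection of all finite index subgroups of $K$ and $k_i$ the order of $\varphi(u_i)R_K$ in $K/R_K$; $rdef(Q)=n-\sum 1/k_i$, and $rdef(K)$ is the supremum of $rdef(Q)$ over all finite presentations of $K$. *)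

theory Defs
  imports "HOL-Algebra.Algebra" "HOL-Library.Extended_Real"
begin

text \<open>A letter (i, False) stands for the generator x_i, (i, True) for its inverse.\<close>
type_synonym word = "(nat \<times> bool) list"

fun push :: "nat \<times> bool \<Rightarrow> word \<Rightarrow> word" where
  "push x [] = [x]"
| "push x (y # ys) = (if y = (fst x, \<not> snd x) then ys else x # y # ys)"

definition red :: "word \<Rightarrow> word" where
  "red w = foldr push w []"

definition freegrp :: "nat \<Rightarrow> word monoid" where
  "freegrp n = \<lparr> carrier = {w. set w \<subseteq> {..<n} \<times> UNIV \<and> red w = w},
                 monoid.mult = (\<lambda>a b. red (a @ b)), monoid.one = [] \<rparr>"

definition word_eval :: "('g, 'b) monoid_scheme \<Rightarrow> (nat \<Rightarrow> 'g) \<Rightarrow> word \<Rightarrow> 'g" where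
  "word_eval K a w =
     foldr (\<lambda>(i, b) acc. (if b then inv\<^bsub>K\<^esub> (a i) else a i) \<otimes>\<^bsub>K\<^esub> acc) w \<one>\<^bsub>K\<^esub>"

definition normal_closure :: "('g, 'b) monoid_scheme \<Rightarrow> 'g set \<Rightarrow> 'g set" where
  "normal_closure K S =
     generate K (\<Union>g\<in>carrier K. (\<lambda>s. g \<otimes>\<^bsub>K\<^esub> s \<otimes>\<^bsub>K\<^esub> inv\<^bsub>K\<^esub> g) ` S)"

definition proper_power :: "('g, 'b) monoid_scheme \<Rightarrow> 'g \<Rightarrow> bool" where
  "proper_power K u \<longleftrightarrow> (\<exists>v\<in>carrier K. \<exists>k::nat. k \<ge> 2 \<and> u = v [^]\<^bsub>K\<^esub> k)"

definition fin_res :: "('g, 'b) monoid_scheme \<Rightarrow> 'g set" where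
  "fin_res K = carrier K \<inter> \<Inter> {H. subgroup H K \<and> finite (rcosets\<^bsub>K\<^esub> H)}"

definition residually_finite :: "('g, 'b) monoid_scheme \<Rightarrow> bool" where
  "residually_finite K \<longleftrightarrow> fin_res K = {\<one>\<^bsub>K\<^esub>}"

text \<open>(n, a, R) is a finite presentation of K: Q = < x_0..x_(n-1) | R >, with the
  canonical map phi : F_n -> K given by x_i |-> a i, which is onto and has kernel the
  normal closure of R; i.e. F_n / <<R>> is identified with K via phi.\<close>
definition fin_pres :: "('g, 'b) monoid_scheme \<Rightarrow> nat \<Rightarrow> (nat \<Rightarrow> 'g) \<Rightarrow> word set \<Rightarrow> bool" where
  "fin_pres K n a R \<longleftrightarrow>
     (\<forall>i<n. a i \<in> carrier K) \<and>
     finite R \<and> R \<subseteq> carrier (freegrp n) \<and> [] \<notin> R \<and>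
     word_eval K a ` carrier (freegrp n) = carrier K \<and>
     kernel (freegrp n) K (word_eval K a) = normal_closure (freegrp n) R"

definition finitely_presented :: "('g, 'b) monoid_scheme \<Rightarrow> bool" where
  "finitely_presented K \<longleftrightarrow> (\<exists>n a R. fin_pres K n a R)"

text \<open>The root of a relator r: the (unique) u in F_n, not a proper power, with
  r = u^m for some m >= 1.\<close>
definition froot :: "nat \<Rightarrow> word \<Rightarrow> word" where
  "froot n r = (SOME u. u \<in> carrier (freegrp n) \<and> \<not> proper_power (freegrp n) u \<and>
                      (\<exists>m::nat. m \<ge> 1 \<and> r = u [^]\<^bsub>freegrp n\<^esub> m))"

text \<open>k_i = order of phi(u_i) R_K in K / R_K; infinite order (ord = 0) gives 1/k_i = 0.\<close>
definition rdef_pres :: "('g, 'b) monoid_scheme \<Rightarrow> nat \<Rightarrow> (nat \<Rightarrow> 'g) \<Rightarrow> word set \<Rightarrow> real" where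
  "rdef_pres K n a R =
     real n - (\<Sum>r\<in>R. let k = group.ord (K Mod fin_res K)
                                  (fin_res K #>\<^bsub>K\<^esub> word_eval K a (froot n r))
                       in if k = 0 then 0 else 1 / real k)"

definition rdef :: "('g, 'b) monoid_scheme \<Rightarrow> ereal" where
  "rdef K = (SUP p \<in> {(n, a, R). fin_pres K n a R}.
               ereal (case p of (n, a, R) \<Rightarrow> rdef_pres K n a R))"

end

theory Submission
  imports Defs "HOL-Library.Infinite_Set"
begin

text \<open>Fix a presentation of \<open>G\<close> with residual deficiency \<open>> 1\<close> and a large \<open>N\<close>. Residual
  finiteness gives a subgroup \<open>M\<close> of finite index avoiding the finitely many non-trivial powers
  \<open>u\<^sub>i\<^sup>j\<close> (\<open>j < k\<^sub>i\<close>) of the relator roots and \<open>g\<^sup>j\<close> (\<open>j < N\<close>) of the \<open>g\<close> of infinite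
  order. For \<open>k\<close> a multiple of \<open>N\<close>, of the finite orders of the \<open>g\<close> and of the factorial of the
  index of \<open>M\<close>, all \<open>k\<close>-th powers lie in \<open>M\<close>, so \<open>H\<^sub>k \<subseteq> M\<close>. Adding \<open>k\<close>-th powers of words
  for the \<open>g\<close> of infinite order to the relators presents \<open>G/H\<^sub>k\<close>, and residual orders in
  \<open>G/H\<^sub>k\<close> are detected in \<open>M\<close>: the old roots keep order at least \<open>k\<^sub>i\<close>, and a power of the
  root of a new relator is some \<open>g\<close>, so its order is at least \<open>N\<close>. Hence
  \<open>rdef(G/H\<^sub>k) \<ge> rdef(Q) - m/N > 1\<close> for \<open>m\<close> the number of the \<open>g\<close>, and \<open>k \<ge> N\<close> can be
  taken arbitrarily large.\<close>

section \<open>Reduced words\<close>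

definition inv_letter :: "nat \<times> bool \<Rightarrow> nat \<times> bool" where
  "inv_letter x = (fst x, \<not> snd x)"

lemma inv_letter_inv_letter [simp]: "inv_letter (inv_letter x) = x"
  by (cases x) (simp add: inv_letter_def)

lemma inv_letter_neq [simp]: "inv_letter x \<noteq> x" "x \<noteq> inv_letter x"
  by (cases x, simp add: inv_letter_def)+

definition inv_word :: "word \<Rightarrow> word" where
  "inv_word w = rev (map inv_letter w)"

lemma inv_word_inv_word [simp]: "inv_word (inv_word w) = w"
  by (simp add: inv_word_def rev_map comp_def)

lemma inv_word_append [simp]: "inv_word (u @ w) = inv_word w @ inv_word u"
  by (simp add: inv_word_def)

lemma inv_word_Nil [simp]: "inv_word [] = []"
  by (simp add: inv_word_def)

lemma inv_word_Cons: "inv_word (x # w) = inv_word w @ [inv_letter x]"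
  by (simp add: inv_word_def)

lemma length_inv_word [simp]: "length (inv_word w) = length w"
  by (simp add: inv_word_def)

fun reduced :: "word \<Rightarrow> bool" where
  "reduced (x # y # ys) \<longleftrightarrow> y \<noteq> inv_letter x \<and> reduced (y # ys)"
| "reduced _ \<longleftrightarrow> True"

lemma push_eq: "push x v = (if v \<noteq> [] \<and> hd v = inv_letter x then tl v else x # v)"
  by (cases v) (auto simp: inv_letter_def)

lemma reduced_Cons: "reduced (x # v) \<longleftrightarrow> reduced v \<and> (v \<noteq> [] \<longrightarrow> hd v \<noteq> inv_letter x)"
  by (cases v) auto

lemma reduced_append:
  "reduced (u @ w) \<longleftrightarrow>
     reduced u \<and> reduced w \<and> (u \<noteq> [] \<longrightarrow> w \<noteq> [] \<longrightarrow> hd w \<noteq> inv_letter (last u))"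
  by (induction u) (auto simp: reduced_Cons)

lemma reduced_tl: "reduced v \<Longrightarrow> reduced (tl v)"
  by (cases v) (auto simp: reduced_Cons)

lemma reduced_push: "reduced v \<Longrightarrow> reduced (push x v)"
  by (auto simp: push_eq reduced_Cons reduced_tl)

lemma reduced_foldr_push: "reduced v \<Longrightarrow> reduced (foldr push xs v)"
  by (induction xs) (auto intro: reduced_push)

lemma reduced_inv_word: "reduced w \<Longrightarrow> reduced (inv_word w)"
proof (induction w)
  case (Cons x w)
  then show ?case
    by (cases w) (auto simp: inv_word_Cons reduced_append reduced_Cons inv_word_def hd_rev last_map)
qed simp

lemma red_Nil [simp]: "red [] = []"
  by (simp add: red_def)

lemma red_Cons: "red (x # w) = push x (red w)"
  by (simp add: red_def)

lemma red_append: "red (u @ w) = foldr push u (red w)"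
  by (simp add: red_def)

lemma reduced_red: "reduced (red w)"
  unfolding red_def by (rule reduced_foldr_push) simp

lemma red_reduced: "reduced w \<Longrightarrow> red w = w"
  by (induction w) (auto simp: red_Cons reduced_Cons push_eq)

lemma red_eq_self_iff: "red w = w \<longleftrightarrow> reduced w"
  by (metis red_reduced reduced_red)

lemma push_inv_letter_push: "reduced v \<Longrightarrow> push (inv_letter x) (push x v) = v"
  by (cases v) (auto simp: push_eq reduced_Cons)

lemma foldr_push_push:
  assumes "reduced u" "reduced v"
  shows "foldr push (push x u) v = push x (foldr push u v)"
proof (cases "u \<noteq> [] \<and> hd u = inv_letter x")
  case True
  then obtain u' where "u = inv_letter x # u'"
    by (cases u) auto
  moreover have "reduced (foldr push u' v)"
    using assms reduced_foldr_push by blast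
  ultimately show ?thesis
    using push_inv_letter_push[of _ "inv_letter x"] by (simp add: push_eq)
next
  case False
  then show ?thesis
    by (auto simp: push_eq)
qed

lemma foldr_push_red: "reduced v \<Longrightarrow> foldr push (red u) v = foldr push u v"
  by (induction u) (simp_all add: red_Cons foldr_push_push reduced_red)

lemma red_red_append: "red (red u @ w) = red (u @ w)"
  by (simp add: red_append foldr_push_red reduced_red)

lemma red_append_red: "red (u @ red w) = red (u @ w)"
  by (simp add: red_append red_reduced reduced_red)

lemma foldr_push_inv_word_cancel: "reduced v \<Longrightarrow> foldr push (inv_word c @ c) v = v"
proof (induction c arbitrary: v)
  case (Cons x c)
  have "reduced (foldr push c v)"
    using Cons reduced_foldr_push by blast
  then show ?case
    using Cons by (simp add: inv_word_Cons push_inv_letter_push)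
qed simp

lemma red_cancel_middle: "red (u @ inv_word c @ c @ w) = red (u @ w)"
  by (simp add: red_append foldr_push_inv_word_cancel[OF reduced_red, of c w, simplified])

lemma set_push: "set (push x v) \<subseteq> insert x (set v)"
  by (cases v) (auto simp: push_eq dest: list.set_sel(2))

lemma set_red: "set (red w) \<subseteq> set w"
  by (induction w) (auto simp: red_Cons dest!: set_push[THEN subsetD])

section \<open>The free group\<close>

abbreviation letters :: "nat \<Rightarrow> (nat \<times> bool) set" where
  "letters n \<equiv> {..<n} \<times> UNIV"

lemma carrier_freegrp: "w \<in> carrier (freegrp n) \<longleftrightarrow> set w \<subseteq> letters n \<and> reduced w"
  by (simp add: freegrp_def red_eq_self_iff)

lemma mult_freegrp [simp]: "u \<otimes>\<^bsub>freegrp n\<^esub> w = red (u @ w)"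
  by (simp add: freegrp_def)

lemma one_freegrp [simp]: "\<one>\<^bsub>freegrp n\<^esub> = []"
  by (simp add: freegrp_def)

lemma set_inv_word_letters: "set w \<subseteq> letters n \<Longrightarrow> set (inv_word w) \<subseteq> letters n"
  by (auto simp: inv_word_def inv_letter_def)

lemma inv_word_in_freegrp: "w \<in> carrier (freegrp n) \<Longrightarrow> inv_word w \<in> carrier (freegrp n)"
  by (simp add: carrier_freegrp set_inv_word_letters reduced_inv_word)

lemma red_inv_word_append: "red (inv_word w @ w) = []"
  using red_cancel_middle[of "[]" w "[]"] by simp

lemma red_in_freegrp: "set w \<subseteq> letters n \<Longrightarrow> red w \<in> carrier (freegrp n)"
  using set_red[of w] by (auto simp: carrier_freegrp reduced_red)

lemma group_freegrp: "group (freegrp n)"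
proof (rule groupI)
  fix u w assume "u \<in> carrier (freegrp n)" "w \<in> carrier (freegrp n)"
  then show "u \<otimes>\<^bsub>freegrp n\<^esub> w \<in> carrier (freegrp n)"
    using red_in_freegrp[of "u @ w" n] by (auto simp: carrier_freegrp)
next
  fix u w z
  show "u \<otimes>\<^bsub>freegrp n\<^esub> w \<otimes>\<^bsub>freegrp n\<^esub> z = u \<otimes>\<^bsub>freegrp n\<^esub> (w \<otimes>\<^bsub>freegrp n\<^esub> z)"
    by (simp add: red_red_append red_append_red)
next
  fix w assume "w \<in> carrier (freegrp n)"
  then show "\<one>\<^bsub>freegrp n\<^esub> \<otimes>\<^bsub>freegrp n\<^esub> w = w"
    by (simp add: carrier_freegrp red_reduced)
next
  fix w assume "w \<in> carrier (freegrp n)"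
  then show "\<exists>v\<in>carrier (freegrp n). v \<otimes>\<^bsub>freegrp n\<^esub> w = \<one>\<^bsub>freegrp n\<^esub>"
    using inv_word_in_freegrp red_inv_word_append by auto
qed (simp add: carrier_freegrp)

interpretation F: group "freegrp n"
  by (rule group_freegrp)

lemma pow_freegrp_Nil: "[] [^]\<^bsub>freegrp n\<^esub> (j::nat) = []"
  using F.nat_pow_one[of n j] by simp

section \<open>Evaluation of words\<close>

definition letter_eval :: "('g, 'b) monoid_scheme \<Rightarrow> (nat \<Rightarrow> 'g) \<Rightarrow> nat \<times> bool \<Rightarrow> 'g" where
  "letter_eval K a x = (if snd x then inv\<^bsub>K\<^esub> (a (fst x)) else a (fst x))"

lemma word_eval_Nil [simp]: "word_eval K a [] = \<one>\<^bsub>K\<^esub>"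
  by (simp add: word_eval_def)

lemma word_eval_Cons: "word_eval K a (x # w) = letter_eval K a x \<otimes>\<^bsub>K\<^esub> word_eval K a w"
  by (cases x) (simp add: word_eval_def letter_eval_def)

context group begin

lemma letter_eval_closed: "a (fst x) \<in> carrier G \<Longrightarrow> letter_eval G a x \<in> carrier G"
  by (simp add: letter_eval_def)

lemma letter_eval_inv_letter:
  "a (fst x) \<in> carrier G \<Longrightarrow> letter_eval G a (inv_letter x) = inv (letter_eval G a x)"
  by (cases x) (auto simp: letter_eval_def inv_letter_def)

lemma word_eval_closed:
  "(\<And>x. x \<in> set w \<Longrightarrow> a (fst x) \<in> carrier G) \<Longrightarrow> word_eval G a w \<in> carrier G"
  by (induction w) (auto simp: word_eval_Cons letter_eval_closed)

lemma word_eval_append: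
  "(\<And>x. x \<in> set (u @ w) \<Longrightarrow> a (fst x) \<in> carrier G) \<Longrightarrow>
   word_eval G a (u @ w) = word_eval G a u \<otimes> word_eval G a w"
  by (induction u) (auto simp: word_eval_Cons letter_eval_closed word_eval_closed m_assoc)

lemma word_eval_push:
  assumes "\<And>y. y \<in> set (x # v) \<Longrightarrow> a (fst y) \<in> carrier G"
  shows "word_eval G a (push x v) = word_eval G a (x # v)"
proof (cases "v \<noteq> [] \<and> hd v = inv_letter x")
  case True
  then obtain v' where "v = inv_letter x # v'"
    by (cases v) auto
  with assms show ?thesis
    by (simp add: push_eq word_eval_Cons letter_eval_inv_letter letter_eval_closed
        word_eval_closed m_assoc[symmetric])
next
  case False
  then show ?thesis
    by (auto simp: push_eq)
qed

lemma word_eval_red: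
  "(\<And>x. x \<in> set w \<Longrightarrow> a (fst x) \<in> carrier G) \<Longrightarrow> word_eval G a (red w) = word_eval G a w"
proof (induction w)
  case (Cons x w)
  have "word_eval G a (red (x # w)) = word_eval G a (x # red w)"
    unfolding red_Cons using Cons.prems set_red[of w] by (intro word_eval_push) auto
  then show ?case
    using Cons by (simp add: word_eval_Cons)
qed simp

lemma word_eval_hom:
  assumes "\<forall>i<n. a i \<in> carrier G"
  shows "group_hom (freegrp n) G (word_eval G a)"
proof -
  have letters: "a (fst x) \<in> carrier G" if "x \<in> set w" "w \<in> carrier (freegrp n)" for x w
    using that assms by (auto simp: carrier_freegrp)
  have "word_eval G a \<in> hom (freegrp n) G"
  proof (rule homI)
    fix u w assume u: "u \<in> carrier (freegrp n)" and w: "w \<in> carrier (freegrp n)"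
    have "word_eval G a (red (u @ w)) = word_eval G a (u @ w)"
      using letters[OF _ u] letters[OF _ w] by (intro word_eval_red) auto
    also have "\<dots> = word_eval G a u \<otimes> word_eval G a w"
      using letters[OF _ u] letters[OF _ w] by (intro word_eval_append) auto
    finally show "word_eval G a (u \<otimes>\<^bsub>freegrp n\<^esub> w) = word_eval G a u \<otimes> word_eval G a w"
      by simp
  qed (use letters in \<open>auto intro: word_eval_closed\<close>)
  then show ?thesis
    by (simp add: group_hom_def group_hom_axioms_def group_freegrp is_group)
qed

end

section \<open>Roots in the free group\<close>

definition list_pow :: "'a list \<Rightarrow> nat \<Rightarrow> 'a list" where
  "list_pow v j = concat (replicate j v)"

lemma list_pow_0 [simp]: "list_pow v 0 = []"
  by (simp add: list_pow_def)

lemma list_pow_Suc: "list_pow v (Suc j) = v @ list_pow v j"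
  by (simp add: list_pow_def)

lemma list_pow_Suc': "list_pow v (Suc j) = list_pow v j @ v"
  by (induction j) (simp_all add: list_pow_def)

lemma list_pow_add: "list_pow v (i + j) = list_pow v i @ list_pow v j"
  by (induction i) (simp_all add: list_pow_Suc)

lemma length_list_pow [simp]: "length (list_pow v j) = j * length v"
  by (induction j) (simp_all add: list_pow_Suc)

lemma list_pow_eq_Nil_iff: "list_pow v j = [] \<longleftrightarrow> v = [] \<or> j = 0"
  by (simp add: list_pow_def)

lemma hd_list_pow: "v \<noteq> [] \<Longrightarrow> j \<ge> 1 \<Longrightarrow> hd (list_pow v j) = hd v"
  by (cases j) (simp_all add: list_pow_Suc)

lemma last_list_pow: "v \<noteq> [] \<Longrightarrow> j \<ge> 1 \<Longrightarrow> last (list_pow v j) = last v"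
  by (cases j) (simp_all add: list_pow_Suc')

lemma set_list_pow: "set (list_pow v j) = (if j = 0 then {} else set v)"
  by (simp add: list_pow_def)

lemma list_pow_commute: "v @ list_pow v j = list_pow v j @ v"
  by (metis list_pow_Suc list_pow_Suc')

lemma append_commute_imp_list_pow:
  "x @ y = y @ x \<Longrightarrow> \<exists>t p q. x = list_pow t p \<and> y = list_pow t q"
proof (induction "length x + length y" arbitrary: x y rule: less_induct)
  case less
  show ?case
  proof (cases "x = [] \<or> y = []")
    case True
    then show ?thesis
      by (metis append.right_neutral list_pow_0 list_pow_Suc)
  next
    case False
    show ?thesis
    proof (cases "length x \<le> length y")
      case True
      then have "x = take (length x) y"
        using arg_cong[OF less.prems, of "take (length x)"] by simp
      then obtain y' where y: "y = x @ y'"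
        by (metis append_take_drop_id)
      have "x @ y' = y' @ x" "length x + length y' < length x + length y"
        using less.prems y False by simp_all
      then obtain t p q where "x = list_pow t p" "y' = list_pow t q"
        using less.hyps by blast
      then show ?thesis
        using y list_pow_add by metis
    next
      case False': False
      then have "y = take (length y) x"
        using arg_cong[OF less.prems, of "take (length y)"] by simp
      then obtain x' where x: "x = y @ x'"
        by (metis append_take_drop_id)
      have "y @ x' = x' @ y" "length y + length x' < length x + length y"
        using less.prems x False by simp_all
      then obtain t p q where "y = list_pow t p" "x' = list_pow t q"
        using less.hyps by blast
      then show ?thesis
        using x list_pow_add by metis
    qed
  qed
qed

lemma list_pow_eq_imp_commute:
  assumes eq: "list_pow u j = list_pow w k" and "j \<ge> 1" "k \<ge> 1"
  shows "u @ w = w @ u"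
proof (cases "j = 1 \<or> k = 1")
  case True
  then consider "u = list_pow w k" | "w = list_pow u j"
    using eq by (auto simp: list_pow_Suc)
  then show ?thesis
    by cases (simp_all add: list_pow_commute)
next
  case False
  define z where "z = list_pow u j"
  obtain j' k' where j': "j = Suc j'" and k': "k = Suc k'"
    using assms by (cases j; cases k) auto
  have "length (list_pow u j) = length (list_pow w k)"
    by (rule arg_cong[OF eq])
  then have "length z = j * length u" "length z = k * length w" "j \<ge> 2" "k \<ge> 2"
    using False assms(2,3) by (auto simp: z_def)
  then have "2 * length u \<le> length z" "2 * length w \<le> length z"
    using mult_le_mono1 by metis+
  then have long: "length u + length w \<le> length z"
    by linarith
  have "u @ w = take (length u + length w) (u @ z)"
    using eq by (simp add: z_def k' list_pow_Suc)
  also have "\<dots> = take (length u + length w) z"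
    using long by (simp add: z_def list_pow_commute)
  also have "\<dots> = take (length u + length w) (w @ z)"
    using long eq by (simp add: z_def list_pow_commute)
  also have "\<dots> = w @ u"
    by (simp add: z_def j' list_pow_Suc)
  finally show ?thesis .
qed

definition cyclically_reduced :: "word \<Rightarrow> bool" where
  "cyclically_reduced v \<longleftrightarrow> reduced v \<and> v \<noteq> [] \<and> hd v \<noteq> inv_letter (last v)"

lemma reduced_conjugate_decomp:
  "reduced w \<Longrightarrow> w \<noteq> [] \<Longrightarrow> \<exists>c v. w = c @ v @ inv_word c \<and> cyclically_reduced v"
proof (induction "length w" arbitrary: w rule: less_induct)
  case less
  show ?case
  proof (cases "hd w = inv_letter (last w)")
    case False
    then show ?thesis
      using less.prems by (intro exI[of _ "[]"] exI[of _ w]) (auto simp: cyclically_reduced_def)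
  next
    case True
    then have "length w \<noteq> 1"
      by (cases w) auto
    then obtain x m y where w: "w = x # m @ [y]"
      using less.prems by (metis append_butlast_last_id butlast.simps(2) length_Cons list.exhaust
          list.size(3) One_nat_def)
    then have y: "y = inv_letter x"
      using True by simp
    then have "m \<noteq> []" "reduced m"
      using less.prems w by (auto simp: reduced_Cons reduced_append)
    then obtain c v where "m = c @ v @ inv_word c" "cyclically_reduced v"
      using less.hyps[of m] w by auto
    then show ?thesis
      using w y by (intro exI[of _ "x # c"] exI[of _ v]) (simp add: inv_word_Cons)
  qed
qed

lemma reduced_replace_middle:
  assumes "reduced (c @ v @ d)" "v \<noteq> []" "v' \<noteq> []" "reduced v'" "hd v' = hd v" "last v' = last v"
  shows "reduced (c @ v' @ d)"
  using assms by (auto simp: reduced_append)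

lemma reduced_list_pow: "cyclically_reduced v \<Longrightarrow> reduced (list_pow v j)"
proof (induction j)
  case (Suc j)
  then show ?case
    by (cases j) (auto simp: list_pow_Suc reduced_append hd_list_pow cyclically_reduced_def)
qed simp

lemma cyclically_reduced_list_pow:
  "cyclically_reduced v \<Longrightarrow> j \<ge> 1 \<Longrightarrow> cyclically_reduced (list_pow v j)"
  using reduced_list_pow[of v j]
  by (auto simp: cyclically_reduced_def hd_list_pow last_list_pow list_pow_eq_Nil_iff)

lemma pow_freegrp_conjugate:
  assumes w: "w = c @ v @ inv_word c" "cyclically_reduced v" "w \<in> carrier (freegrp n)"
    and "j \<ge> 1"
  shows "w [^]\<^bsub>freegrp n\<^esub> j = c @ list_pow v j @ inv_word c"
proof -
  have "w [^]\<^bsub>freegrp n\<^esub> (Suc j) = c @ list_pow v (Suc j) @ inv_word c" for j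
  proof (induction j)
    case 0
    then show ?case
      using w by (simp add: carrier_freegrp red_reduced list_pow_Suc)
  next
    case (Suc j)
    have "w [^]\<^bsub>freegrp n\<^esub> (Suc (Suc j))
        = red ((c @ list_pow v (Suc j)) @ inv_word c @ c @ (v @ inv_word c))"
      using Suc w by simp
    also have "\<dots> = red (c @ list_pow v (Suc (Suc j)) @ inv_word c)"
      by (subst red_cancel_middle) (simp add: list_pow_Suc')
    also have "\<dots> = c @ list_pow v (Suc (Suc j)) @ inv_word c"
    proof (rule red_reduced, rule reduced_replace_middle[of c v])
      show "reduced (c @ v @ inv_word c)"
        using w by (simp add: carrier_freegrp)
    qed (use w(2) reduced_list_pow in
        \<open>auto simp: cyclically_reduced_def hd_list_pow last_list_pow list_pow_eq_Nil_iff\<close>)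
    finally show ?case .
  qed
  moreover obtain j' where "j = Suc j'"
    using \<open>j \<ge> 1\<close> by (cases j) auto
  ultimately show ?thesis
    by simp
qed

lemma exists_root:
  "w \<in> carrier (freegrp n) \<Longrightarrow> w \<noteq> [] \<Longrightarrow>
   \<exists>u s. u \<in> carrier (freegrp n) \<and> \<not> proper_power (freegrp n) u \<and> (s::nat) \<ge> 1 \<and>
     w = u [^]\<^bsub>freegrp n\<^esub> s"
proof (induction "length w" arbitrary: w rule: less_induct)
  case less
  show ?case
  proof (cases "proper_power (freegrp n) w")
    case False
    have "w [^]\<^bsub>freegrp n\<^esub> (1::nat) = w"
      using less.prems by (simp add: carrier_freegrp red_reduced)
    then show ?thesis
      using False less.prems by (metis order_refl)
  next
    case True
    then obtain v t where v: "v \<in> carrier (freegrp n)" "t \<ge> 2" "w = v [^]\<^bsub>freegrp n\<^esub> (t::nat)"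
      unfolding proper_power_def by blast
    then have "v \<noteq> []"
      using less.prems pow_freegrp_Nil by metis
    then obtain c u where cu: "v = c @ u @ inv_word c" "cyclically_reduced u"
      using reduced_conjugate_decomp[of v] v(1) by (auto simp: carrier_freegrp)
    then have "length w = 2 * length c + t * length u" "length u > 0"
      using pow_freegrp_conjugate[OF cu v(1), of t] v by (auto simp: cyclically_reduced_def)
    then have "length v < length w"
      using cu v(2) by (simp add: less_le_trans[of _ "2 * length u"])
    then obtain \<rho> s where \<rho>: "\<rho> \<in> carrier (freegrp n)" "\<not> proper_power (freegrp n) \<rho>"
      "(s::nat) \<ge> 1" "v = \<rho> [^]\<^bsub>freegrp n\<^esub> s"
      using less.hyps[of v] v(1) \<open>v \<noteq> []\<close> by blast
    then have "w = \<rho> [^]\<^bsub>freegrp n\<^esub> (s * t)" "s * t \<ge> 1"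
      using v by (simp_all add: F.nat_pow_pow)
    then show ?thesis
      using \<rho> by blast
  qed
qed

lemma conjugate_decomp_unique:
  assumes "c @ A @ inv_word c = d @ B @ inv_word d"
    and "A \<noteq> []" "hd A \<noteq> inv_letter (last A)" "B \<noteq> []" "hd B \<noteq> inv_letter (last B)"
  shows "c = d"
proof -
  have shorter_eq: "c = d"
    if eq: "c @ A @ inv_word c = d @ B @ inv_word d" and A: "hd A \<noteq> inv_letter (last A)"
      and le: "length c \<le> length d" for c d A B
  proof -
    have "c = take (length c) d"
      using le arg_cong[OF eq, of "take (length c)"] by simp
    then obtain e where d: "d = c @ e"
      by (metis append_take_drop_id)
    then have "A = e @ B @ inv_word e"
      using eq by simp
    then show ?thesis
      using A d by (cases e) (auto simp: inv_word_Cons)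
  qed
  show ?thesis
  proof (cases "length c \<le> length d")
    case True
    then show ?thesis
      using shorter_eq[OF assms(1,3)] by blast
  next
    case False
    then show ?thesis
      using shorter_eq[OF assms(1)[symmetric] assms(5)] by simp
  qed
qed

lemma cyclically_reduced_list_pow_root:
  assumes "cyclically_reduced (list_pow t p)"
  shows "cyclically_reduced t"
proof -
  have "t \<noteq> []" "p \<ge> 1"
    using assms by (auto simp: cyclically_reduced_def list_pow_eq_Nil_iff)
  then obtain p' where "list_pow t p = t @ list_pow t p'"
    by (cases p) (auto simp: list_pow_Suc)
  then have "reduced t"
    using assms by (auto simp: cyclically_reduced_def reduced_append)
  moreover have "hd (list_pow t p) = hd t" "last (list_pow t p) = last t"
    using \<open>t \<noteq> []\<close> \<open>p \<ge> 1\<close> by (simp_all add: hd_list_pow last_list_pow)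
  ultimately show ?thesis
    using assms \<open>t \<noteq> []\<close> by (simp add: cyclically_reduced_def)
qed

lemma common_root:
  assumes u: "u \<in> carrier (freegrp n)" "u \<noteq> []" and w: "w \<in> carrier (freegrp n)" "w \<noteq> []"
    and j: "j \<ge> 1" and k: "k \<ge> 1"
    and eq: "u [^]\<^bsub>freegrp n\<^esub> (j::nat) = w [^]\<^bsub>freegrp n\<^esub> (k::nat)"
  shows "\<exists>t p q. t \<in> carrier (freegrp n) \<and> p \<ge> 1 \<and> q \<ge> 1 \<and>
           u = t [^]\<^bsub>freegrp n\<^esub> (p::nat) \<and> w = t [^]\<^bsub>freegrp n\<^esub> (q::nat)"
proof -
  obtain c u' where cu: "u = c @ u' @ inv_word c" "cyclically_reduced u'"
    using reduced_conjugate_decomp[of u] u by (auto simp: carrier_freegrp)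
  obtain d w' where dw: "w = d @ w' @ inv_word d" "cyclically_reduced w'"
    using reduced_conjugate_decomp[of w] w by (auto simp: carrier_freegrp)
  have "c @ list_pow u' j @ inv_word c = u [^]\<^bsub>freegrp n\<^esub> j"
    by (rule pow_freegrp_conjugate[OF cu u(1) j, symmetric])
  also have "\<dots> = w [^]\<^bsub>freegrp n\<^esub> k"
    by (rule eq)
  also have "\<dots> = d @ list_pow w' k @ inv_word d"
    by (rule pow_freegrp_conjugate[OF dw w(1) k])
  finally have pows: "c @ list_pow u' j @ inv_word c = d @ list_pow w' k @ inv_word d" .
  moreover have "cyclically_reduced (list_pow u' j)" "cyclically_reduced (list_pow w' k)"
    using cyclically_reduced_list_pow cu dw j k by blast+
  ultimately have "c = d"
    by (intro conjugate_decomp_unique[OF pows]) (simp_all add: cyclically_reduced_def)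
  then have "list_pow u' j = list_pow w' k"
    using pows by simp
  then obtain t p q where tpq: "u' = list_pow t p" "w' = list_pow t q"
    using append_commute_imp_list_pow[OF list_pow_eq_imp_commute] j k by blast
  have t: "cyclically_reduced t"
    using cyclically_reduced_list_pow_root cu(2) tpq(1) by blast
  have pq: "p \<ge> 1" "q \<ge> 1"
    using cu(2) dw(2) tpq by (auto simp: cyclically_reduced_def list_pow_eq_Nil_iff)
  define T where "T = c @ t @ inv_word c"
  have "hd t = hd u'" "last t = last u'"
    using t pq tpq by (simp_all add: cyclically_reduced_def hd_list_pow last_list_pow)
  moreover have "reduced (c @ u' @ inv_word c)"
    using u(1) cu(1) by (simp add: carrier_freegrp)
  ultimately have "reduced T"
    unfolding T_def using cu(2) t
    by (intro reduced_replace_middle[of c u' _ t]) (simp_all add: cyclically_reduced_def)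
  moreover have "set T \<subseteq> letters n"
  proof -
    have "set c \<subseteq> letters n" "set t \<subseteq> letters n"
      using u cu tpq pq by (auto simp: carrier_freegrp set_list_pow)
    then show ?thesis
      using set_inv_word_letters by (auto simp: T_def)
  qed
  ultimately have T: "T \<in> carrier (freegrp n)"
    by (simp add: carrier_freegrp)
  have "T [^]\<^bsub>freegrp n\<^esub> p = u" "T [^]\<^bsub>freegrp n\<^esub> q = w"
    using pow_freegrp_conjugate[OF T_def t T] pq tpq cu dw \<open>c = d\<close> by simp_all
  then show ?thesis
    using T pq by metis
qed

lemma froot_spec:
  assumes "r \<in> carrier (freegrp n)" "r \<noteq> []"
  shows "froot n r \<in> carrier (freegrp n)" "\<not> proper_power (freegrp n) (froot n r)"
    "\<exists>m::nat. m \<ge> 1 \<and> r = froot n r [^]\<^bsub>freegrp n\<^esub> m"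
proof -
  have "\<exists>u. u \<in> carrier (freegrp n) \<and> \<not> proper_power (freegrp n) u \<and>
          (\<exists>m::nat. m \<ge> 1 \<and> r = u [^]\<^bsub>freegrp n\<^esub> m)"
    using exists_root[OF assms] by blast
  from someI_ex[OF this] show "froot n r \<in> carrier (freegrp n)"
    "\<not> proper_power (freegrp n) (froot n r)"
    "\<exists>m::nat. m \<ge> 1 \<and> r = froot n r [^]\<^bsub>freegrp n\<^esub> m"
    unfolding froot_def by blast+
qed

lemma proper_power_Nil: "proper_power (freegrp n) []"
  unfolding proper_power_def
  by (rule bexI[of _ "[]"]) (auto simp: pow_freegrp_Nil carrier_freegrp intro!: exI[of _ 2])

lemma pow_froot_pow:
  assumes w: "w \<in> carrier (freegrp n)" and k: "k \<ge> 1"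
    and ne: "w [^]\<^bsub>freegrp n\<^esub> (k::nat) \<noteq> []"
  shows "\<exists>q::nat. q \<ge> 1 \<and> w = froot n (w [^]\<^bsub>freegrp n\<^esub> k) [^]\<^bsub>freegrp n\<^esub> q"
proof -
  define u where "u = froot n (w [^]\<^bsub>freegrp n\<^esub> k)"
  obtain m :: nat where m: "m \<ge> 1" "w [^]\<^bsub>freegrp n\<^esub> k = u [^]\<^bsub>freegrp n\<^esub> m"
    using froot_spec(3)[of "w [^]\<^bsub>freegrp n\<^esub> k"] w ne unfolding u_def by auto
  have u: "u \<in> carrier (freegrp n)" "\<not> proper_power (freegrp n) u"
    using froot_spec(1,2)[of "w [^]\<^bsub>freegrp n\<^esub> k"] w ne unfolding u_def by auto
  then have "u \<noteq> []"
    using proper_power_Nil by blast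
  moreover have "w \<noteq> []"
    using ne pow_freegrp_Nil by metis
  ultimately obtain t p q where tpq: "t \<in> carrier (freegrp n)" "(p::nat) \<ge> 1" "(q::nat) \<ge> 1"
     "u = t [^]\<^bsub>freegrp n\<^esub> p" "w = t [^]\<^bsub>freegrp n\<^esub> q"
    using common_root[OF u(1) _ w _ m(1) k m(2)[symmetric]] by blast
  have "p = 1"
  proof (rule ccontr)
    assume "p \<noteq> 1"
    then have "p \<ge> 2"
      using tpq by simp
    then have "proper_power (freegrp n) u"
      using tpq unfolding proper_power_def by blast
    then show False
      using u by simp
  qed
  then have "u = t"
    using tpq by (simp add: carrier_freegrp red_reduced)
  then show ?thesis
    using tpq unfolding u_def by blast
qed

section \<open>Normal closures and subgroups of finite index\<close>

context group begin

lemma mult_inv_cancel_left: "x \<in> carrier G \<Longrightarrow> y \<in> carrier G \<Longrightarrow> x \<otimes> (inv x \<otimes> y) = y"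
  by (simp add: m_assoc[symmetric])

lemma inv_mult_cancel_left: "x \<in> carrier G \<Longrightarrow> y \<in> carrier G \<Longrightarrow> inv x \<otimes> (x \<otimes> y) = y"
  by (simp add: m_assoc[symmetric])

lemma conj_nat_pow:
  assumes "c \<in> carrier G" "g \<in> carrier G"
  shows "c \<otimes> g [^] (k::nat) \<otimes> inv c = (c \<otimes> g \<otimes> inv c) [^] k"
proof (induction k)
  case (Suc k)
  have "(c \<otimes> g \<otimes> inv c) [^] Suc k = (c \<otimes> g [^] k \<otimes> inv c) \<otimes> (c \<otimes> g \<otimes> inv c)"
    using Suc by simp
  also have "\<dots> = c \<otimes> (g [^] k \<otimes> g) \<otimes> inv c"
    using assms by (simp add: m_assoc inv_mult_cancel_left)
  finally show ?case
    by simp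
qed (use assms in simp)

lemma subgroup_nat_pow_closed: "subgroup M G \<Longrightarrow> h \<in> M \<Longrightarrow> h [^] (q::nat) \<in> M"
  by (induction q) (auto simp: subgroup.one_closed subgroup.m_closed)

lemma normal_closure_normal:
  assumes "S \<subseteq> carrier G"
  shows "normal_closure G S \<lhd> G"
  unfolding normal_closure_def
proof (rule normal_generateI)
  show "(\<Union>g\<in>carrier G. (\<lambda>s. g \<otimes> s \<otimes> inv g) ` S) \<subseteq> carrier G"
    using assms by auto
  fix h g assume "h \<in> (\<Union>g\<in>carrier G. (\<lambda>s. g \<otimes> s \<otimes> inv g) ` S)" and g: "g \<in> carrier G"
  then obtain c s where cs: "c \<in> carrier G" "s \<in> S" "h = c \<otimes> s \<otimes> inv c"
    by blast
  then have "g \<otimes> h \<otimes> inv g = (g \<otimes> c) \<otimes> s \<otimes> inv (g \<otimes> c)"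
    using g assms by (auto simp: m_assoc inv_mult_group)
  then show "g \<otimes> h \<otimes> inv g \<in> (\<Union>g\<in>carrier G. (\<lambda>s. g \<otimes> s \<otimes> inv g) ` S)"
    using cs g by auto
qed

lemma normal_closure_subgroup: "S \<subseteq> carrier G \<Longrightarrow> subgroup (normal_closure G S) G"
  using normal_closure_normal normal_invE by blast

lemma conj_in_normal_closure:
  "S \<subseteq> carrier G \<Longrightarrow> g \<in> carrier G \<Longrightarrow> s \<in> S \<Longrightarrow> g \<otimes> s \<otimes> inv g \<in> normal_closure G S"
  unfolding normal_closure_def by (rule generate.incl) blast

lemma subset_normal_closure: "S \<subseteq> carrier G \<Longrightarrow> S \<subseteq> normal_closure G S"
  using conj_in_normal_closure[of S \<one>] by force

lemma normal_closure_minimal: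
  assumes "subgroup K G" "\<And>g s. g \<in> carrier G \<Longrightarrow> s \<in> S \<Longrightarrow> g \<otimes> s \<otimes> inv g \<in> K"
  shows "normal_closure G S \<subseteq> K"
  unfolding normal_closure_def using assms by (intro generate_subgroup_incl) auto

lemma normal_closure_mono: "S \<subseteq> T \<Longrightarrow> normal_closure G S \<subseteq> normal_closure G T"
  unfolding normal_closure_def by (rule mono_generate) blast

lemma normal_closure_Diff_one:
  assumes "S \<subseteq> carrier G"
  shows "normal_closure G (S - {\<one>}) = normal_closure G S"
proof
  have K: "subgroup (normal_closure G (S - {\<one>})) G"
    using assms by (intro normal_closure_subgroup) blast
  show "normal_closure G S \<subseteq> normal_closure G (S - {\<one>})"
  proof (rule normal_closure_minimal[OF K])
    fix g s assume "g \<in> carrier G" "s \<in> S"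
    then show "g \<otimes> s \<otimes> inv g \<in> normal_closure G (S - {\<one>})"
      using assms subgroup.one_closed[OF K] conj_in_normal_closure[of "S - {\<one>}" g s]
      by (cases "s = \<one>") auto
  qed
qed (rule normal_closure_mono, blast)

text \<open>The subgroup \<open>M\<close> need not be normal: conjugates of \<open>k\<close>-th powers are \<open>k\<close>-th powers.\<close>

lemma normal_closure_nat_pow_subset:
  assumes "subgroup M G" "S \<subseteq> carrier G" "\<And>x. x \<in> carrier G \<Longrightarrow> x [^] (k::nat) \<in> M"
  shows "normal_closure G ((\<lambda>g. g [^] k) ` S) \<subseteq> M"
  using assms by (intro normal_closure_minimal) (auto simp: conj_nat_pow)

lemma finite_rcosets_carrier: "finite (rcosets (carrier G))"
proof -
  have "rcosets (carrier G) \<subseteq> {carrier G}"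
    unfolding RCOSETS_def using subgroup.rcos_const[OF subgroup_self is_group] by auto
  then show ?thesis
    using finite_subset by blast
qed

lemma rcos_Int:
  assumes "subgroup A G" "subgroup B G" "x \<in> carrier G"
  shows "(A \<inter> B) #> x = (A #> x) \<inter> (B #> x)"
proof
  show "(A #> x) \<inter> (B #> x) \<subseteq> (A \<inter> B) #> x"
  proof
    fix y assume "y \<in> (A #> x) \<inter> (B #> x)"
    then obtain a b where ab: "a \<in> A" "b \<in> B" "y = a \<otimes> x" "y = b \<otimes> x"
      unfolding r_coset_def by blast
    then have "a = b"
      using assms subgroup.mem_carrier by (metis r_cancel)
    then show "y \<in> (A \<inter> B) #> x"
      using ab unfolding r_coset_def by blast
  qed
qed (auto simp: r_coset_def)

lemma finite_rcosets_Int: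
  assumes "subgroup A G" "subgroup B G" "finite (rcosets A)" "finite (rcosets B)"
  shows "finite (rcosets (A \<inter> B))"
proof -
  have "rcosets (A \<inter> B) \<subseteq> (\<lambda>(P, Q). P \<inter> Q) ` ((rcosets A) \<times> (rcosets B))"
    using assms rcos_Int unfolding RCOSETS_def by fastforce
  then show ?thesis
    using assms finite_subset by blast
qed

text \<open>Pigeonhole on the cosets \<open>M #> x [^] i\<close>, \<open>i \<le> t\<close>, gives \<open>x [^] d \<in> M\<close> for some
  \<open>0 < d \<le> t\<close>, and \<open>d\<close> divides \<open>t!\<close>.\<close>

lemma nat_pow_fact_index_in_subgroup:
  assumes M: "subgroup M G" "finite (rcosets M)" and x: "x \<in> carrier G"
  shows "x [^] (fact (card (rcosets M)) :: nat) \<in> M"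
proof -
  define t where "t = card (rcosets M)"
  define f where "f = (\<lambda>j::nat. M #> x [^] j)"
  have "f ` {0..t} \<subseteq> rcosets M"
    unfolding f_def RCOSETS_def using x by auto
  then have "card (f ` {0..t}) \<le> t"
    unfolding t_def using M(2) card_mono by blast
  then have "\<not> inj_on f {0..t}"
    using card_image[of f "{0..t}"] by auto
  then obtain a b where ab: "a \<in> {0..t}" "b \<in> {0..t}" "a \<noteq> b" "f a = f b"
    unfolding inj_on_def by blast
  define i j where "i = min a b" and "j = max a b"
  then have ij: "i \<in> {0..t}" "j \<in> {0..t}" "i < j" "f i = f j"
    using ab by (auto simp: min_def max_def)
  then have "x [^] j \<otimes> inv (x [^] i) \<in> M"
    using subgroup.rcos_module_imp[OF M(1) is_group, of "x [^] i" "x [^] j"] rcos_self[OF _ M(1)] x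
    by (simp add: f_def)
  moreover have "x [^] j = x [^] (j - i) \<otimes> x [^] i"
    using ij x nat_pow_mult[OF x, of "j - i" i] by simp
  ultimately have "x [^] (j - i) \<in> M"
    using x by (simp add: m_assoc)
  moreover have "(j - i) dvd fact t"
    using ij by (intro dvd_fact) auto
  then obtain q where "fact t = (j - i) * q"
    by (rule dvdE)
  then have "x [^] (fact t :: nat) = (x [^] (j - i)) [^] q"
    using x by (simp add: nat_pow_pow)
  ultimately show ?thesis
    using subgroup_nat_pow_closed[OF M(1)] unfolding t_def by simp
qed

lemma fin_res_subgroup: "subgroup (fin_res G) G"
proof -
  have "fin_res G = \<Inter>{H. subgroup H G \<and> finite (rcosets H)}"
    using subgroup_self finite_rcosets_carrier subgroup.subset unfolding fin_res_def by blast
  then show ?thesis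
    by (metis (mono_tags, lifting) subgroups_Inter subgroup_self finite_rcosets_carrier
        mem_Collect_eq empty_iff)
qed

lemma conj_subgroup:
  assumes K: "subgroup K G" and x: "x \<in> carrier G"
  shows "subgroup ((\<lambda>y. inv x \<otimes> y \<otimes> x) ` K) G"
proof -
  interpret h: group_hom G G "\<lambda>y. inv x \<otimes> y \<otimes> x"
    using x by unfold_locales (auto intro!: homI simp: m_assoc inv_mult_cancel_left mult_inv_cancel_left)
  show ?thesis
    by (rule h.subgroup_img_is_subgroup[OF K])
qed

lemma finite_rcosets_conj:
  assumes K: "subgroup K G" "finite (rcosets K)" and x: "x \<in> carrier G"
  shows "finite (rcosets ((\<lambda>y. inv x \<otimes> y \<otimes> x) ` K))"
proof -
  have coset: "((\<lambda>y. inv x \<otimes> y \<otimes> x) ` K) #> z = (\<lambda>y. inv x \<otimes> y) ` (K #> (x \<otimes> z))"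
    if "z \<in> carrier G" for z
  proof -
    have "inv x \<otimes> k \<otimes> x \<otimes> z = inv x \<otimes> (k \<otimes> (x \<otimes> z))" if "k \<in> K" for k
      using that K x \<open>z \<in> carrier G\<close> subgroup.mem_carrier by (metis m_assoc m_closed inv_closed)
    then show ?thesis
      unfolding r_coset_def by (auto simp: image_iff)
  qed
  have "rcosets ((\<lambda>y. inv x \<otimes> y \<otimes> x) ` K) \<subseteq> (\<lambda>C. (\<lambda>y. inv x \<otimes> y) ` C) ` (rcosets K)"
  proof
    fix C assume "C \<in> rcosets ((\<lambda>y. inv x \<otimes> y \<otimes> x) ` K)"
    then obtain z where z: "z \<in> carrier G" "C = ((\<lambda>y. inv x \<otimes> y \<otimes> x) ` K) #> z"
      unfolding RCOSETS_def by blast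
    then have "C = (\<lambda>y. inv x \<otimes> y) ` (K #> (x \<otimes> z))"
      using coset by blast
    moreover have "K #> (x \<otimes> z) \<in> rcosets K"
      using x z unfolding RCOSETS_def by blast
    ultimately show "C \<in> (\<lambda>C. (\<lambda>y. inv x \<otimes> y) ` C) ` (rcosets K)"
      by blast
  qed
  then show ?thesis
    using K(2) finite_subset by blast
qed

lemma fin_res_normal: "fin_res G \<lhd> G"
proof (rule normal_invI[OF fin_res_subgroup])
  fix x h assume x: "x \<in> carrier G" and h: "h \<in> fin_res G"
  have "x \<otimes> h \<otimes> inv x \<in> K" if K: "subgroup K G" "finite (rcosets K)" for K
  proof -
    have "h \<in> (\<lambda>y. inv x \<otimes> y \<otimes> x) ` K"
      using h conj_subgroup[OF K(1) x] finite_rcosets_conj[OF K x] unfolding fin_res_def by blast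
    then obtain k where k: "k \<in> K" "h = inv x \<otimes> k \<otimes> x"
      by blast
    moreover have "k \<in> carrier G"
      using k K subgroup.mem_carrier by metis
    ultimately have "x \<otimes> h \<otimes> inv x = k"
      using x by (simp add: m_assoc mult_inv_cancel_left)
    then show ?thesis
      using k by simp
  qed
  moreover have "x \<otimes> h \<otimes> inv x \<in> carrier G"
    using x h fin_res_subgroup subgroup.mem_carrier by (metis inv_closed m_closed)
  ultimately show "x \<otimes> h \<otimes> inv x \<in> fin_res G"
    unfolding fin_res_def by blast
qed

lemma finite_index_subgroup_avoiding:
  assumes "fin_res G = {\<one>}" "finite S" "S \<subseteq> carrier G" "\<one> \<notin> S"
  shows "\<exists>M. subgroup M G \<and> finite (rcosets M) \<and> M \<inter> S = {}"
  using assms(2-)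
proof (induction S rule: finite_induct)
  case empty
  then show ?case
    using subgroup_self finite_rcosets_carrier by blast
next
  case (insert s S)
  then obtain M where M: "subgroup M G" "finite (rcosets M)" "M \<inter> S = {}"
    by auto
  have "s \<notin> fin_res G"
    using insert assms(1) by auto
  then obtain K where K: "subgroup K G" "finite (rcosets K)" "s \<notin> K"
    using insert unfolding fin_res_def by blast
  then have "subgroup (M \<inter> K) G" "finite (rcosets (M \<inter> K))"
    using M subgroups_Inter_pair finite_rcosets_Int by blast+
  moreover have "(M \<inter> K) \<inter> insert s S = {}"
    using M K by blast
  ultimately show ?case
    by blast
qed

lemma ord_Mod_one:
  assumes x: "x \<in> carrier G"
  shows "group.ord (G Mod {\<one>}) ({\<one>} #> x) = ord x"
proof -
  interpret N: normal "{\<one>}" G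
    by (rule one_is_normal)
  interpret Q: group "G Mod {\<one>}"
    by (rule N.factorgroup_is_group)
  have "({\<one>} #> x) [^]\<^bsub>G Mod {\<one>}\<^esub> n = \<one>\<^bsub>G Mod {\<one>}\<^esub> \<longleftrightarrow> x [^] n = \<one>" for n :: nat
    using N.FactGroup_pow[OF x, of n] x by (simp add: r_coset_def)
  then have "Q.ord ({\<one>} #> x) dvd n \<longleftrightarrow> ord x dvd n" for n
    using Q.pow_eq_id pow_eq_id[OF x] x by (simp add: carrier_FactGroup)
  then show ?thesis
    by (meson dvd_antisym dvd_refl)
qed

end

lemma (in group_hom) image_normal_closure:
  assumes S: "S \<subseteq> carrier G" and surj: "h ` carrier G = carrier H"
  shows "h ` normal_closure G S = normal_closure H (h ` S)"
proof -
  have conj: "h (g \<otimes>\<^bsub>G\<^esub> s \<otimes>\<^bsub>G\<^esub> inv\<^bsub>G\<^esub> g) = h g \<otimes>\<^bsub>H\<^esub> h s \<otimes>\<^bsub>H\<^esub> inv\<^bsub>H\<^esub> h g"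
    if "g \<in> carrier G" "s \<in> S" for g s
    using that S by (simp add: subsetD)
  have "h ` (\<Union>g\<in>carrier G. (\<lambda>s. g \<otimes>\<^bsub>G\<^esub> s \<otimes>\<^bsub>G\<^esub> inv\<^bsub>G\<^esub> g) ` S)
        = (\<Union>g\<in>h ` carrier G. (\<lambda>s. g \<otimes>\<^bsub>H\<^esub> s \<otimes>\<^bsub>H\<^esub> inv\<^bsub>H\<^esub> g) ` h ` S)"
    using conj by (auto simp: image_iff) metis+
  then show ?thesis
    using S surj unfolding normal_closure_def by (subst generate_img[symmetric]) auto
qed

lemma (in group_hom) mem_of_image_mem:
  assumes M: "subgroup M G" and ker: "kernel G H h \<subseteq> M"
    and x: "x \<in> carrier G" and hx: "h x \<in> h ` M"
  shows "x \<in> M"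
proof -
  obtain m where m: "h x = h m" "m \<in> M"
    using hx by (rule imageE)
  have mc: "m \<in> carrier G"
    by (rule subgroup.mem_carrier[OF M m(2)])
  have "x \<otimes>\<^bsub>G\<^esub> inv\<^bsub>G\<^esub> m \<in> kernel G H h"
    using x mc m(1) unfolding kernel_def by simp
  then have "x \<otimes>\<^bsub>G\<^esub> inv\<^bsub>G\<^esub> m \<in> M"
    using ker by (rule subsetD[rotated])
  then have "x \<otimes>\<^bsub>G\<^esub> inv\<^bsub>G\<^esub> m \<otimes>\<^bsub>G\<^esub> m \<in> M"
    using subgroup.m_closed[OF M _ m(2)] by blast
  then show ?thesis
    using x mc by (simp add: G.m_assoc)
qed

section \<open>Residual orders in quotients\<close>

context normal begin

lemma group_hom_Mod: "group_hom G (G Mod H) (\<lambda>y. H #> y)"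
  unfolding group_hom_def group_hom_axioms_def
  using is_group factorgroup_is_group r_coset_hom_Mod by blast

lemma word_eval_Mod:
  assumes "\<forall>i<n. a i \<in> carrier G" "set w \<subseteq> letters n"
  shows "word_eval (G Mod H) (\<lambda>i. H #> a i) w = H #> word_eval G a w"
  using assms(2)
proof (induction w)
  case (Cons x w)
  interpret h: group_hom G "G Mod H" "\<lambda>y. H #> y"
    by (rule group_hom_Mod)
  have "a (fst x) \<in> carrier G"
    using Cons.prems assms(1) by auto
  moreover have "word_eval G a w \<in> carrier G"
    using Cons.prems assms(1) by (intro word_eval_closed) auto
  ultimately show ?case
    using Cons by (cases x) (simp add: word_eval_Cons letter_eval_def h.hom_mult[symmetric])
qed (use subset in simp)

lemma coset_image_rcos:
  assumes "subgroup M G" "y \<in> carrier G"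
  shows "((\<lambda>g. H #> g) ` M) #>\<^bsub>G Mod H\<^esub> (H #> y) = (\<lambda>g. H #> g) ` (M #> y)"
proof -
  have "(H #> m) \<otimes>\<^bsub>G Mod H\<^esub> (H #> y) = H #> (m \<otimes> y)" if "m \<in> M" for m
    using that assms rcos_sum subgroup.mem_carrier by (metis FactGroup_def monoid.select_convs(1))
  then show ?thesis
    unfolding r_coset_def by (auto simp: image_iff)
qed

lemma finite_rcosets_coset_image:
  assumes "subgroup M G" "finite (rcosets M)"
  shows "finite (rcosets\<^bsub>G Mod H\<^esub> ((\<lambda>g. H #> g) ` M))"
proof -
  have "rcosets\<^bsub>G Mod H\<^esub> ((\<lambda>g. H #> g) ` M) \<subseteq> (\<lambda>C. (\<lambda>g. H #> g) ` C) ` (rcosets M)"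
  proof
    fix C assume "C \<in> rcosets\<^bsub>G Mod H\<^esub> ((\<lambda>g. H #> g) ` M)"
    then obtain y where y: "y \<in> carrier G" "C = ((\<lambda>g. H #> g) ` M) #>\<^bsub>G Mod H\<^esub> (H #> y)"
      unfolding RCOSETS_def by (auto simp: carrier_FactGroup)
    then have "C = (\<lambda>g. H #> g) ` (M #> y)"
      using coset_image_rcos assms by blast
    moreover have "M #> y \<in> rcosets M"
      using y unfolding RCOSETS_def by blast
    ultimately show "C \<in> (\<lambda>C. (\<lambda>g. H #> g) ` C) ` (rcosets M)"
      by blast
  qed
  then show ?thesis
    using assms(2) finite_subset by blast
qed

lemma kernel_coset_map: "kernel G (G Mod H) (\<lambda>y. H #> y) = H"
proof -
  have "H #> y = H \<longleftrightarrow> y \<in> H" if "y \<in> carrier G" for y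
    using rcos_self[OF that subgroup_axioms] rcos_const[OF is_group] by blast
  then show ?thesis
    unfolding kernel_def using subset by auto
qed

text \<open>The image of \<open>M\<close> in \<open>G Mod H\<close> has finite index, so it contains the residual of
  \<open>G Mod H\<close>.\<close>

lemma nat_pow_residual_ord_Mod_in:
  assumes M: "subgroup M G" "finite (rcosets M)" "H \<subseteq> M" and x: "x \<in> carrier G"
  shows "x [^] (group.ord ((G Mod H) Mod fin_res (G Mod H))
                 (fin_res (G Mod H) #>\<^bsub>G Mod H\<^esub> (H #> x))) \<in> M"
proof -
  interpret Q: group "G Mod H"
    by (rule factorgroup_is_group)
  interpret h: group_hom G "G Mod H" "\<lambda>y. H #> y"
    by (rule group_hom_Mod)
  define R where "R = fin_res (G Mod H)"
  interpret R: normal R "G Mod H"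
    unfolding R_def by (rule Q.fin_res_normal)
  interpret QR: group "(G Mod H) Mod R"
    by (rule R.factorgroup_is_group)
  define e where "e = QR.ord (R #>\<^bsub>G Mod H\<^esub> (H #> x))"
  have Hx: "H #> x \<in> carrier (G Mod H)" "H #> x [^] e \<in> carrier (G Mod H)"
    using x by (simp_all add: carrier_FactGroup)
  have "R #>\<^bsub>G Mod H\<^esub> (H #> x [^] e) = R"
    using QR.pow_ord_eq_1[of "R #>\<^bsub>G Mod H\<^esub> (H #> x)"] R.FactGroup_pow[OF Hx(1)]
      FactGroup_pow[OF x] Hx(1) unfolding e_def by (simp add: carrier_FactGroup)
  then have "H #> x [^] e \<in> R"
    using Q.rcos_self[OF Hx(2) R.subgroup_axioms] by simp
  moreover have "R \<subseteq> (\<lambda>g. H #> g) ` M"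
    using h.subgroup_img_is_subgroup[OF M(1)] finite_rcosets_coset_image[OF M(1,2)]
    unfolding R_def fin_res_def by blast
  ultimately have "H #> x [^] e \<in> (\<lambda>g. H #> g) ` M"
    by blast
  then show ?thesis
    using h.mem_of_image_mem[OF M(1) _ nat_pow_closed[OF x]] kernel_coset_map M(3)
    unfolding e_def R_def by simp
qed

end

definition res_weight :: "('g, 'b) monoid_scheme \<Rightarrow> 'g \<Rightarrow> real" where
  "res_weight K x =
     (let k = group.ord (K Mod fin_res K) (fin_res K #>\<^bsub>K\<^esub> x) in if k = 0 then 0 else 1 / real k)"

lemma rdef_pres_eq: "rdef_pres K n a R = real n - (\<Sum>r\<in>R. res_weight K (word_eval K a (froot n r)))"
  by (simp add: rdef_pres_def res_weight_def)

lemma res_weight_nonneg: "res_weight K x \<ge> 0"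
  by (simp add: res_weight_def Let_def)

lemma (in group) res_weight_residually_finite:
  "fin_res G = {\<one>} \<Longrightarrow> x \<in> carrier G \<Longrightarrow> ord x > 0 \<Longrightarrow> res_weight G x = 1 / real (ord x)"
  by (simp add: res_weight_def ord_Mod_one)

lemma (in normal) res_weight_Mod_le:
  assumes M: "subgroup M G" "finite (rcosets M)" "H \<subseteq> M" and x: "x \<in> carrier G"
    and "d > 0" and avoid: "\<And>j. j \<in> {1..<d} \<Longrightarrow> x [^] j \<notin> M"
  shows "res_weight (G Mod H) (H #> x) \<le> 1 / real d"
proof -
  define e where "e = group.ord ((G Mod H) Mod fin_res (G Mod H))
                        (fin_res (G Mod H) #>\<^bsub>G Mod H\<^esub> (H #> x))"
  have "x [^] e \<in> M"
    unfolding e_def by (rule nat_pow_residual_ord_Mod_in[OF M x])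
  then have "e = 0 \<or> d \<le> e"
    using avoid[of e] by fastforce
  moreover have "1 / real e \<le> 1 / real d" if "d \<le> e"
    using that \<open>d > 0\<close> by (simp add: frac_le)
  ultimately show ?thesis
    unfolding res_weight_def e_def[symmetric] by auto
qed

section \<open>Presentations of quotients\<close>

lemma fin_pres_hom: "group G \<Longrightarrow> fin_pres G n a R \<Longrightarrow> group_hom (freegrp n) G (word_eval G a)"
  using group.word_eval_hom unfolding fin_pres_def by blast

lemma fin_pres_relator:
  assumes "group G" "fin_pres G n a R" "r \<in> R"
  shows "word_eval G a r = \<one>\<^bsub>G\<^esub>"
proof -
  have "r \<in> normal_closure (freegrp n) R"
    using group.subset_normal_closure[OF group_freegrp] assms(2,3) unfolding fin_pres_def by blast
  then show ?thesis
    using assms(2) unfolding fin_pres_def kernel_def by blast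
qed

lemma fin_pres_root_closed:
  assumes "group G" "fin_pres G n a R" "w \<in> carrier (freegrp n)" "w \<noteq> []"
  shows "word_eval G a (froot n w) \<in> carrier G"
  using group_hom.hom_closed[OF fin_pres_hom[OF assms(1,2)] froot_spec(1)[OF assms(3,4)]] .

lemma fin_pres_ord_root_pos:
  assumes G: "group G" and P: "fin_pres G n a R" and r: "r \<in> R"
  shows "group.ord G (word_eval G a (froot n r)) > 0"
proof -
  interpret phi: group_hom "freegrp n" G "word_eval G a"
    by (rule fin_pres_hom[OF G P])
  have rc: "r \<in> carrier (freegrp n)" "r \<noteq> []"
    using P r unfolding fin_pres_def by auto
  obtain m :: nat where m: "m \<ge> 1" "r = froot n r [^]\<^bsub>freegrp n\<^esub> m"
    using froot_spec(3)[OF rc] by blast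
  have "word_eval G a (froot n r) [^]\<^bsub>G\<^esub> m = \<one>\<^bsub>G\<^esub>"
    using phi.hom_nat_pow[OF froot_spec(1)[OF rc], of m] m(2) fin_pres_relator[OF G P r] by simp
  then have "group.ord G (word_eval G a (froot n r)) dvd m"
    using froot_spec(1)[OF rc] phi.H.pow_eq_id by simp
  then show ?thesis
    using m(1) by (cases "group.ord G (word_eval G a (froot n r))") auto
qed

context normal begin

lemma kernel_word_eval_Mod:
  assumes "\<forall>i<n. a i \<in> carrier G"
  shows "kernel (freegrp n) (G Mod H) (word_eval (G Mod H) (\<lambda>i. H #> a i))
           = {w \<in> carrier (freegrp n). word_eval G a w \<in> H}"
proof -
  interpret phi: group_hom "freegrp n" G "word_eval G a"
    by (rule word_eval_hom[OF assms])
  have "word_eval (G Mod H) (\<lambda>i. H #> a i) w = H \<longleftrightarrow> word_eval G a w \<in> H"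
    if "w \<in> carrier (freegrp n)" for w
    using that word_eval_Mod[OF assms] kernel_coset_map unfolding kernel_def
    by (auto simp: carrier_freegrp)
  then show ?thesis
    unfolding kernel_def by auto
qed

lemma word_eval_Mod_surj:
  assumes "\<forall>i<n. a i \<in> carrier G" "word_eval G a ` carrier (freegrp n) = carrier G"
  shows "word_eval (G Mod H) (\<lambda>i. H #> a i) ` carrier (freegrp n) = carrier (G Mod H)"
proof -
  have "word_eval (G Mod H) (\<lambda>i. H #> a i) ` carrier (freegrp n)
        = (\<lambda>y. H #> y) ` word_eval G a ` carrier (freegrp n)"
    using word_eval_Mod[OF assms(1)] by (auto simp: carrier_freegrp image_iff)
  then show ?thesis
    using assms(2) by (simp add: carrier_FactGroup)
qed

end

lemma fin_pres_preimage_normal_closure: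
  assumes G: "group G" and P: "fin_pres G n a R" and W: "W \<subseteq> carrier (freegrp n)"
    and w: "w \<in> carrier (freegrp n)" "word_eval G a w \<in> normal_closure G (word_eval G a ` W)"
  shows "w \<in> normal_closure (freegrp n) (R \<union> W)"
proof -
  interpret phi: group_hom "freegrp n" G "word_eval G a"
    by (rule fin_pres_hom[OF G P])
  have R: "R \<subseteq> carrier (freegrp n)"
    and surj: "word_eval G a ` carrier (freegrp n) = carrier G"
    and ker: "kernel (freegrp n) G (word_eval G a) = normal_closure (freegrp n) R"
    using P unfolding fin_pres_def by auto
  show ?thesis
  proof (rule phi.mem_of_image_mem[OF F.normal_closure_subgroup _ w(1)])
    show "R \<union> W \<subseteq> carrier (freegrp n)"
      using R W by blast
    show "kernel (freegrp n) G (word_eval G a) \<subseteq> normal_closure (freegrp n) (R \<union> W)"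
      unfolding ker by (rule F.normal_closure_mono) blast
    show "word_eval G a w \<in> word_eval G a ` normal_closure (freegrp n) (R \<union> W)"
      using w(2) F.normal_closure_mono[of W "R \<union> W"] phi.image_normal_closure[OF W surj] by blast
  qed
qed

lemma fin_pres_Mod:
  assumes G: "group G" and P: "fin_pres G n a R"
    and W: "finite W" "W \<subseteq> carrier (freegrp n)" "[] \<notin> W"
  defines "H \<equiv> normal_closure G (word_eval G a ` W)"
  shows "fin_pres (G Mod H) n (\<lambda>i. H #>\<^bsub>G\<^esub> a i) (R \<union> W)"
proof -
  interpret G: group G
    by (rule G)
  have a: "\<forall>i<n. a i \<in> carrier G" and R: "finite R" "R \<subseteq> carrier (freegrp n)" "[] \<notin> R"
    and surj: "word_eval G a ` carrier (freegrp n) = carrier G"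
    using P unfolding fin_pres_def by auto
  have WG: "word_eval G a ` W \<subseteq> carrier G"
    using W group_hom.hom_closed[OF fin_pres_hom[OF G P]] by blast
  interpret N: normal H G
    unfolding H_def by (rule G.normal_closure_normal[OF WG])
  interpret Q: group "G Mod H"
    by (rule N.factorgroup_is_group)
  have a': "\<forall>i<n. H #>\<^bsub>G\<^esub> a i \<in> carrier (G Mod H)"
    using a by (auto simp: carrier_FactGroup)
  interpret psi: group_hom "freegrp n" "G Mod H" "word_eval (G Mod H) (\<lambda>i. H #>\<^bsub>G\<^esub> a i)"
    by (rule Q.word_eval_hom[OF a'])
  have ker_psi: "kernel (freegrp n) (G Mod H) (word_eval (G Mod H) (\<lambda>i. H #>\<^bsub>G\<^esub> a i))
                   = {w \<in> carrier (freegrp n). word_eval G a w \<in> H}"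
    by (rule N.kernel_word_eval_Mod[OF a])
  have "kernel (freegrp n) (G Mod H) (word_eval (G Mod H) (\<lambda>i. H #>\<^bsub>G\<^esub> a i))
          = normal_closure (freegrp n) (R \<union> W)"
  proof
    have "w \<in> kernel (freegrp n) (G Mod H) (word_eval (G Mod H) (\<lambda>i. H #>\<^bsub>G\<^esub> a i))"
      if "w \<in> R \<union> W" for w
      using that R W fin_pres_relator[OF G P] G.subset_normal_closure[OF WG] N.one_closed
      unfolding ker_psi by (auto simp flip: H_def)
    then show "normal_closure (freegrp n) (R \<union> W)
                 \<subseteq> kernel (freegrp n) (G Mod H) (word_eval (G Mod H) (\<lambda>i. H #>\<^bsub>G\<^esub> a i))"
      using F.normal_invE(2)[OF psi.normal_kernel]
      by (intro F.normal_closure_minimal[OF psi.subgroup_kernel]) blast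
    show "kernel (freegrp n) (G Mod H) (word_eval (G Mod H) (\<lambda>i. H #>\<^bsub>G\<^esub> a i))
            \<subseteq> normal_closure (freegrp n) (R \<union> W)"
    proof
      fix w assume "w \<in> kernel (freegrp n) (G Mod H) (word_eval (G Mod H) (\<lambda>i. H #>\<^bsub>G\<^esub> a i))"
      then have "w \<in> carrier (freegrp n)" "word_eval G a w \<in> H"
        unfolding ker_psi by auto
      then show "w \<in> normal_closure (freegrp n) (R \<union> W)"
        unfolding H_def by (rule fin_pres_preimage_normal_closure[OF G P W(2)])
    qed
  qed
  then show ?thesis
    using a' N.word_eval_Mod_surj[OF a surj] R W unfolding fin_pres_def by auto
qed

lemma rdef_pres_le_rdef: "fin_pres K n a R \<Longrightarrow> ereal (rdef_pres K n a R) \<le> rdef K"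
  unfolding rdef_def by (rule SUP_upper2[of "(n, a, R)"]) auto

lemma less_rdef_imp_fin_pres:
  "ereal c < rdef K \<Longrightarrow> \<exists>n a R. fin_pres K n a R \<and> c < rdef_pres K n a R"
  unfolding rdef_def less_SUP_iff by auto

section \<open>Residual deficiency of quotients by powers\<close>

context group begin

lemma exists_exponent_in_subgroup:
  assumes M: "subgroup M G" "finite (rcosets M)" and F: "finite F" "F \<subseteq> carrier G"
    and ord_F: "\<forall>g\<in>F. ord g > 0" and "(N::nat) > 0"
  shows "\<exists>k\<ge>N. (\<forall>x\<in>carrier G. x [^] k \<in> M) \<and> (\<forall>g\<in>F. g [^] k = \<one>)"
proof -
  define L where "L = (\<Prod>g\<in>F. ord g)"
  define k where "k = N * L * fact (card (rcosets M))"
  have "L > 0"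
    unfolding L_def using ord_F by (simp add: prod_pos)
  then have "N \<le> k"
    unfolding k_def by (simp add: Suc_le_eq)
  moreover have "x [^] k \<in> M" if "x \<in> carrier G" for x
  proof -
    have "x [^] k = (x [^] (fact (card (rcosets M)) :: nat)) [^] (N * L)"
      using that by (simp add: k_def nat_pow_pow ac_simps)
    then show ?thesis
      using subgroup_nat_pow_closed[OF M(1) nat_pow_fact_index_in_subgroup[OF M that]] by simp
  qed
  moreover have "g [^] k = \<one>" if "g \<in> F" for g
  proof -
    have "ord g dvd k"
      unfolding k_def L_def using that F by (simp add: dvd_prodI)
    then show ?thesis
      using that F pow_eq_id by auto
  qed
  ultimately show ?thesis
    by blast
qed

lemma exists_separating_subgroup_and_exponent:
  assumes rf: "fin_res G = {\<one>}" and A: "finite A" "A \<subseteq> carrier G" "\<forall>x\<in>A. ord x > 0"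
    and B: "finite B" "B \<subseteq> carrier G" and "(N::nat) > 0"
  shows "\<exists>M k. subgroup M G \<and> finite (rcosets M) \<and> k \<ge> N \<and> (\<forall>x\<in>carrier G. x [^] k \<in> M) \<and>
           (\<forall>y\<in>B. ord y > 0 \<longrightarrow> y [^] k = \<one>) \<and>
           (\<forall>x\<in>A. \<forall>j\<in>{1..<ord x}. x [^] j \<notin> M) \<and>
           (\<forall>y\<in>B. ord y = 0 \<longrightarrow> (\<forall>j\<in>{1..<N}. y [^] j \<notin> M))"
proof -
  define S where "S = (\<Union>x\<in>A. (\<lambda>j::nat. x [^] j) ` {1..<ord x}) \<union>
                      (\<Union>y\<in>{y \<in> B. ord y = 0}. (\<lambda>j::nat. y [^] j) ` {1..<N})"
  have "finite S" "S \<subseteq> carrier G"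
    unfolding S_def using A B by auto
  moreover have "\<one> \<notin> S"
  proof
    assume "\<one> \<in> S"
    then obtain z j where "z \<in> carrier G" "z [^] (j::nat) = \<one>" "1 \<le> j" "j < ord z \<or> ord z = 0"
      unfolding S_def using A B by (auto simp: image_iff)
    then show False
      using pow_eq_id by (auto dest: dvd_imp_le)
  qed
  ultimately obtain M where M: "subgroup M G" "finite (rcosets M)" "M \<inter> S = {}"
    using finite_index_subgroup_avoiding[OF rf] by blast
  have F: "finite {y \<in> B. ord y > 0}" "{y \<in> B. ord y > 0} \<subseteq> carrier G"
    "\<forall>y\<in>{y \<in> B. ord y > 0}. ord y > 0"
    using B by auto
  obtain k where k: "k \<ge> N" "\<forall>x\<in>carrier G. x [^] k \<in> M"
    "\<forall>y\<in>{y \<in> B. ord y > 0}. y [^] k = \<one>"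
    using exists_exponent_in_subgroup[OF M(1,2) F \<open>N > 0\<close>] by blast
  have "\<forall>x\<in>A. \<forall>j\<in>{1..<ord x}. x [^] j \<notin> M"
    "\<forall>y\<in>B. ord y = 0 \<longrightarrow> (\<forall>j\<in>{1..<N}. y [^] j \<notin> M)"
    using M(3) unfolding S_def by blast+
  then show ?thesis
    using M(1,2) k by (intro exI[of _ M] exI[of _ k]) simp
qed

end

lemma fin_pres_pow_relator:
  assumes G: "group G" and P: "fin_pres G n a R"
    and g: "g \<in> carrier G" "g [^]\<^bsub>G\<^esub> (k::nat) \<noteq> \<one>\<^bsub>G\<^esub>" and "k \<ge> 1"
  shows "\<exists>w\<in>carrier (freegrp n). w \<noteq> [] \<and> word_eval G a w = g [^]\<^bsub>G\<^esub> k \<and>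
           (\<exists>q::nat. q \<ge> 1 \<and> g = word_eval G a (froot n w) [^]\<^bsub>G\<^esub> q)"
proof -
  interpret phi: group_hom "freegrp n" G "word_eval G a"
    by (rule fin_pres_hom[OF G P])
  have "g \<in> word_eval G a ` carrier (freegrp n)"
    using P g(1) unfolding fin_pres_def by blast
  then obtain v where v: "g = word_eval G a v" "v \<in> carrier (freegrp n)"
    by (rule imageE)
  define w where "w = v [^]\<^bsub>freegrp n\<^esub> k"
  have w: "w \<in> carrier (freegrp n)" "word_eval G a w = g [^]\<^bsub>G\<^esub> k"
    unfolding w_def using phi.hom_nat_pow[OF v(2)] v by simp_all
  then have "w \<noteq> []"
    using g(2) by auto
  then obtain q :: nat where q: "q \<ge> 1" "v = froot n w [^]\<^bsub>freegrp n\<^esub> q"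
    using pow_froot_pow[OF v(2) \<open>k \<ge> 1\<close>] unfolding w_def by blast
  have "g = word_eval G a (froot n w) [^]\<^bsub>G\<^esub> q"
    using v(1) q(2) phi.hom_nat_pow[OF froot_spec(1)[OF w(1) \<open>w \<noteq> []\<close>]] by simp
  then show ?thesis
    using w \<open>w \<noteq> []\<close> q(1) by blast
qed

lemma fin_pres_Mod_powers:
  assumes G: "group G" and P: "fin_pres G n a R" and gs: "set gs \<subseteq> carrier G"
    and "(k::nat) \<ge> 1" and torsion: "\<forall>g\<in>set gs. group.ord G g > 0 \<longrightarrow> g [^]\<^bsub>G\<^esub> k = \<one>\<^bsub>G\<^esub>"
  defines "H \<equiv> normal_closure G ((\<lambda>g. g [^]\<^bsub>G\<^esub> k) ` set gs)"
  shows "\<exists>W. finite W \<and> W \<subseteq> carrier (freegrp n) \<and> [] \<notin> W \<and> card W \<le> length gs \<and>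
           fin_pres (G Mod H) n (\<lambda>i. H #>\<^bsub>G\<^esub> a i) (R \<union> W) \<and>
           (\<forall>w\<in>W. \<exists>g\<in>set gs. group.ord G g = 0 \<and>
              (\<exists>q::nat. q \<ge> 1 \<and> g = word_eval G a (froot n w) [^]\<^bsub>G\<^esub> q))"
proof -
  interpret G: group G
    by (rule G)
  define I where "I = {g \<in> set gs. G.ord g = 0}"
  have "g [^]\<^bsub>G\<^esub> k \<noteq> \<one>\<^bsub>G\<^esub> \<longleftrightarrow> G.ord g = 0" if "g \<in> set gs" for g
  proof -
    have "g [^]\<^bsub>G\<^esub> k = \<one>\<^bsub>G\<^esub> \<longleftrightarrow> G.ord g dvd k"
      using that gs by (intro G.pow_eq_id) blast
    then show ?thesis
      using that torsion \<open>k \<ge> 1\<close> by auto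
  qed
  then have I: "I = {g \<in> set gs. g [^]\<^bsub>G\<^esub> k \<noteq> \<one>\<^bsub>G\<^esub>}"
    unfolding I_def by blast
  then have "\<forall>g\<in>I. \<exists>w\<in>carrier (freegrp n). w \<noteq> [] \<and> word_eval G a w = g [^]\<^bsub>G\<^esub> k \<and>
               (\<exists>q::nat. q \<ge> 1 \<and> g = word_eval G a (froot n w) [^]\<^bsub>G\<^esub> q)"
    using fin_pres_pow_relator[OF G P _ _ \<open>k \<ge> 1\<close>] gs by blast
  then obtain word where word: "\<forall>g\<in>I. word g \<in> carrier (freegrp n) \<and> word g \<noteq> [] \<and>
      word_eval G a (word g) = g [^]\<^bsub>G\<^esub> k \<and>
      (\<exists>q::nat. q \<ge> 1 \<and> g = word_eval G a (froot n (word g)) [^]\<^bsub>G\<^esub> q)"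
    by metis
  define W where "W = word ` I"
  have "word_eval G a ` W = (\<lambda>g. g [^]\<^bsub>G\<^esub> k) ` set gs - {\<one>\<^bsub>G\<^esub>}"
    using word unfolding W_def I by (auto simp: image_iff)
  moreover have "(\<lambda>g. g [^]\<^bsub>G\<^esub> k) ` set gs \<subseteq> carrier G"
    using gs by auto
  ultimately have H: "H = normal_closure G (word_eval G a ` W)"
    unfolding H_def by (simp add: G.normal_closure_Diff_one)
  have W: "finite W" "W \<subseteq> carrier (freegrp n)" "[] \<notin> W"
    using word unfolding W_def I_def by auto
  have "card W \<le> card I"
    unfolding W_def by (rule card_image_le) (simp add: I_def)
  also have "\<dots> \<le> card (set gs)"
    unfolding I_def by (rule card_mono) auto
  also have "\<dots> \<le> length gs"
    by (rule card_length)
  finally have "card W \<le> length gs" .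
  moreover have "\<forall>w\<in>W. \<exists>g\<in>set gs. G.ord g = 0 \<and>
                   (\<exists>q::nat. q \<ge> 1 \<and> g = word_eval G a (froot n w) [^]\<^bsub>G\<^esub> q)"
    using word unfolding W_def I_def by blast
  ultimately show ?thesis
    using fin_pres_Mod[OF G P W] W unfolding H by (intro exI[of _ W]) simp
qed

lemma rdef_pres_Mod_ge:
  assumes G: "group G" "fin_res G = {\<one>\<^bsub>G\<^esub>}" and P: "fin_pres G n a R" and H: "H \<lhd> G"
    and W: "finite W" "W \<subseteq> carrier (freegrp n)" "[] \<notin> W"
    and M: "subgroup M G" "finite (rcosets\<^bsub>G\<^esub> M)" "H \<subseteq> M" and "N > 0"
    and avoid_R: "\<And>r j. r \<in> R \<Longrightarrow> j \<in> {1..<group.ord G (word_eval G a (froot n r))} \<Longrightarrow>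
                    word_eval G a (froot n r) [^]\<^bsub>G\<^esub> j \<notin> M"
    and avoid_W: "\<And>w j. w \<in> W \<Longrightarrow> j \<in> {1..<N} \<Longrightarrow> word_eval G a (froot n w) [^]\<^bsub>G\<^esub> j \<notin> M"
  shows "rdef_pres G n a R - real (card W) / real N \<le> rdef_pres (G Mod H) n (\<lambda>i. H #>\<^bsub>G\<^esub> a i) (R \<union> W)"
proof -
  interpret N: normal H G
    by (rule H)
  interpret phi: group_hom "freegrp n" G "word_eval G a"
    by (rule fin_pres_hom[OF G(1) P])
  have a: "\<forall>i<n. a i \<in> carrier G" and R: "finite R" "R \<subseteq> carrier (freegrp n)" "[] \<notin> R"
    using P unfolding fin_pres_def by auto
  define x where "x r = word_eval G a (froot n r)" for r
  define wQ where "wQ r = res_weight (G Mod H) (word_eval (G Mod H) (\<lambda>i. H #>\<^bsub>G\<^esub> a i) (froot n r))" for r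
  have root: "x r \<in> carrier G" "wQ r = res_weight (G Mod H) (H #>\<^bsub>G\<^esub> x r)"
    if "r \<in> carrier (freegrp n)" "r \<noteq> []" for r
    using froot_spec(1)[OF that] N.word_eval_Mod[OF a] unfolding x_def wQ_def
    by (auto simp: carrier_freegrp)
  have "wQ r \<le> res_weight G (x r)" if "r \<in> R" for r
  proof -
    have r: "r \<in> carrier (freegrp n)" "r \<noteq> []"
      using that R by auto
    have pos: "group.ord G (x r) > 0"
      unfolding x_def by (rule fin_pres_ord_root_pos[OF G(1) P that])
    have "wQ r = res_weight (G Mod H) (H #>\<^bsub>G\<^esub> x r)"
      by (rule root(2)[OF r])
    also have "\<dots> \<le> 1 / real (group.ord G (x r))"
      using N.res_weight_Mod_le[OF M root(1)[OF r] pos] avoid_R[OF that] unfolding x_def by blast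
    also have "\<dots> = res_weight G (x r)"
      using N.res_weight_residually_finite[OF G(2) root(1)[OF r] pos] by simp
    finally show ?thesis .
  qed
  then have "sum wQ R \<le> (\<Sum>r\<in>R. res_weight G (x r))"
    by (rule sum_mono)
  moreover have "wQ w \<le> 1 / real N" if "w \<in> W" for w
  proof -
    have w: "w \<in> carrier (freegrp n)" "w \<noteq> []"
      using that W by auto
    show ?thesis
      using root(2)[OF w] N.res_weight_Mod_le[OF M root(1)[OF w] \<open>N > 0\<close>] avoid_W[OF that]
      unfolding x_def by simp
  qed
  then have "sum wQ W \<le> real (card W) * (1 / real N)"
    by (rule sum_bounded_above)
  moreover have "sum wQ (R \<union> W) \<le> sum wQ R + sum wQ W"
    using sum_Un[OF R(1) W(1), of wQ] sum_nonneg[of "R \<inter> W" wQ] res_weight_nonneg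
    unfolding wQ_def by force
  ultimately show ?thesis
    unfolding rdef_pres_eq wQ_def x_def by simp
qed

lemma rdef_Mod_powers_ge:
  assumes G: "group G" and rf: "residually_finite G" and gs: "set gs \<subseteq> carrier G"
    and P: "fin_pres G n a R" and "N > 0"
  shows "\<exists>k\<ge>N. ereal (rdef_pres G n a R - real (length gs) / real N)
                 \<le> rdef (G Mod normal_closure G ((\<lambda>g. g [^]\<^bsub>G\<^esub> k) ` set gs))"
proof -
  interpret G: group G
    by (rule G)
  define x where "x r = word_eval G a (froot n r)" for r
  have "finite (x ` R)" "x ` R \<subseteq> carrier G" "\<forall>y\<in>x ` R. G.ord y > 0"
    using P fin_pres_ord_root_pos[OF G P] fin_pres_root_closed[OF G P]
    unfolding fin_pres_def x_def by auto
  then obtain M k where M: "subgroup M G" "finite (rcosets\<^bsub>G\<^esub> M)" "k \<ge> N"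
      "\<forall>y\<in>carrier G. y [^]\<^bsub>G\<^esub> k \<in> M" "\<forall>g\<in>set gs. G.ord g > 0 \<longrightarrow> g [^]\<^bsub>G\<^esub> k = \<one>\<^bsub>G\<^esub>"
      "\<forall>r\<in>R. \<forall>j\<in>{1..<G.ord (x r)}. x r [^]\<^bsub>G\<^esub> j \<notin> M"
      "\<forall>g\<in>set gs. G.ord g = 0 \<longrightarrow> (\<forall>j\<in>{1..<N}. g [^]\<^bsub>G\<^esub> j \<notin> M)"
    using G.exists_separating_subgroup_and_exponent[of "x ` R" "set gs" N] rf gs \<open>N > 0\<close>
    unfolding residually_finite_def by auto
  define H where "H = normal_closure G ((\<lambda>g. g [^]\<^bsub>G\<^esub> k) ` set gs)"
  have "H \<subseteq> M"
    unfolding H_def using G.normal_closure_nat_pow_subset[OF M(1) gs] M(4) by blast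
  obtain W where W: "finite W" "W \<subseteq> carrier (freegrp n)" "[] \<notin> W" "card W \<le> length gs"
      "fin_pres (G Mod H) n (\<lambda>i. H #>\<^bsub>G\<^esub> a i) (R \<union> W)"
      "\<forall>w\<in>W. \<exists>g\<in>set gs. G.ord g = 0 \<and> (\<exists>q::nat. q \<ge> 1 \<and> g = x w [^]\<^bsub>G\<^esub> q)"
    using fin_pres_Mod_powers[OF G P gs _ M(5)] M(3) \<open>N > 0\<close> unfolding H_def x_def by auto
  have "x w [^]\<^bsub>G\<^esub> j \<notin> M" if "w \<in> W" "j \<in> {1..<N}" for w j
  proof
    assume "x w [^]\<^bsub>G\<^esub> j \<in> M"
    obtain g q where g: "g \<in> set gs" "G.ord g = 0" "g = x w [^]\<^bsub>G\<^esub> (q::nat)"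
      using W(6) \<open>w \<in> W\<close> by blast
    have "x w \<in> carrier G"
      using fin_pres_root_closed[OF G P] W \<open>w \<in> W\<close> unfolding x_def by blast
    then have "g [^]\<^bsub>G\<^esub> j = (x w [^]\<^bsub>G\<^esub> j) [^]\<^bsub>G\<^esub> q"
      using g(3) by (simp add: G.nat_pow_pow mult.commute)
    then have "g [^]\<^bsub>G\<^esub> j \<in> M"
      using G.subgroup_nat_pow_closed[OF M(1) \<open>x w [^]\<^bsub>G\<^esub> j \<in> M\<close>] by simp
    then show False
      using M(7) g(1,2) that(2) by blast
  qed
  moreover have "H \<lhd> G"
    unfolding H_def using gs by (intro G.normal_closure_normal) auto
  ultimately have "rdef_pres G n a R - real (card W) / real N
                     \<le> rdef_pres (G Mod H) n (\<lambda>i. H #>\<^bsub>G\<^esub> a i) (R \<union> W)"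
    using rdef_pres_Mod_ge[OF G _ P _ W(1-3) M(1,2) \<open>H \<subseteq> M\<close> \<open>N > 0\<close>] M(6) rf
    unfolding x_def residually_finite_def by blast
  moreover have "real (card W) / real N \<le> real (length gs) / real N"
    using W(4) by (simp add: divide_right_mono)
  ultimately have "ereal (rdef_pres G n a R - real (length gs) / real N)
                     \<le> ereal (rdef_pres (G Mod H) n (\<lambda>i. H #>\<^bsub>G\<^esub> a i) (R \<union> W))"
    by simp
  then show ?thesis
    using rdef_pres_le_rdef[OF W(5)] M(3) unfolding H_def by (blast intro: order_trans)
qed

theorem mainTheorem18:
  fixes G :: "('g, 'b) monoid_scheme" and gs :: "'g list"
  assumes "group G"
    and "finitely_presented G"
    and "residually_finite G"
    and "set gs \<subseteq> carrier G"
    and "\<forall>g\<in>set gs. g \<noteq> \<one>\<^bsub>G\<^esub>"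
    and "rdef G > 1"
  shows "infinite {k::nat. rdef (G Mod normal_closure G ((\<lambda>g. g [^]\<^bsub>G\<^esub> k) ` set gs)) > 1}"
  unfolding infinite_nat_iff_unbounded_le
proof
  fix m :: nat
  obtain n a R where P: "fin_pres G n a R" and gt: "1 < rdef_pres G n a R"
    using less_rdef_imp_fin_pres[of 1 G] assms(6) by (auto simp: one_ereal_def)
  define N where "N = Suc (max m (nat \<lceil>real (length gs) / (rdef_pres G n a R - 1)\<rceil>))"
  have "real (length gs) / (rdef_pres G n a R - 1) < real N"
    unfolding N_def by linarith
  then have "1 < rdef_pres G n a R - real (length gs) / real N"
    using gt by (simp add: field_simps N_def)
  then have "(1::ereal) < ereal (rdef_pres G n a R - real (length gs) / real N)"
    by simp
  obtain k where k: "k \<ge> N" "ereal (rdef_pres G n a R - real (length gs) / real N)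
      \<le> rdef (G Mod normal_closure G ((\<lambda>g. g [^]\<^bsub>G\<^esub> k) ` set gs))"
    using rdef_Mod_powers_ge[OF assms(1,3,4) P, of N] unfolding N_def by auto
  have "1 < rdef (G Mod normal_closure G ((\<lambda>g. g [^]\<^bsub>G\<^esub> k) ` set gs))"
    using \<open>1 < ereal _\<close> k(2) by (rule less_le_trans)
  moreover have "m \<le> k"
    using k(1) unfolding N_def by simp
  ultimately show "\<exists>k\<ge>m. k \<in> {k. 1 < rdef (G Mod normal_closure G ((\<lambda>g. g [^]\<^bsub>G\<^esub> k) ` set gs))}"
    by blast
qed
end
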